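(* Let $G_0$ be one of $\mathrm{SL}(2,\mathbb R)$, $\mathrm{SL}(2,\mathbb C)$, or $\mathrm{SO}_e(n,1)$ with $n\ge2$, with Lie algebra $\mathfrak g_0$. Let $\mathfrak g=\mathfrak g_0\times\mathfrak g_0\times\mathfrak g_0$ and $\mathfrak h=\{(X,X,X):X\in\mathfrak g_0\}$. Let $\mathfrak p=\mathfrak p_1\times\mathfrak p_2\times\mathfrak p_3$ be a minimal parabolic subalgebra of $\mathfrak g$, where each $\mathfrak p_j$ is a minimal parabolic subalgebra of $\mathfrak g_0$. Then $\mathfrak g=\mathfrak p+\mathfrak h$ if and only if $\mathfrak p_1,\mathfrak p_2,\mathfrak p_3$ are pairwise distinct. In particular, there exists a minimal parabolic subalgebra $\mathfrak p$ of $\mathfrak g$ with $\mathfrak g=\mathfrak p+\mathfrak h$. *)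

theory Defs
  imports "HOL-Analysis.Analysis"
begin

definition mbracket :: "'k::comm_ring_1^'i^'i \<Rightarrow> 'k^'i^'i \<Rightarrow> 'k^'i^'i" where
  "mbracket X Y = X ** Y - Y ** X"

text \<open>Given a real-rank-one matrix Lie algebra g0 and a generator H of a maximal
  split abelian subspace a (normalised so that the positive restricted root takes
  value c on H), the standard minimal parabolic subalgebra m + a + n is the sum of
  the centraliser of H in g0 (which is m + a) and the positive restricted root
  space n = {Z in g0. [H,Z] = c Z}.\<close>
definition std_min_parabolic :: "('k::comm_ring_1^'i^'i) set \<Rightarrow> 'k^'i^'i \<Rightarrow> 'k \<Rightarrow> ('k^'i^'i) set" where
  "std_min_parabolic g0 H c =
     {Y + Z | Y Z. Y \<in> g0 \<and> Z \<in> g0 \<and> mbracket H Y = 0 \<and> mbracket H Z = mat c ** Z}"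

definition min_parabolic ::
  "('k::comm_ring_1^'i^'i) set \<Rightarrow> ('k^'i^'i) set \<Rightarrow> 'k^'i^'i \<Rightarrow> 'k \<Rightarrow> ('k^'i^'i) set \<Rightarrow> bool" where
  "min_parabolic G0 g0 H c p \<longleftrightarrow>
     (\<exists>g\<in>G0. p = (\<lambda>X. g ** X ** matrix_inv g) ` std_min_parabolic g0 H c)"

text \<open>g = p + h for g = g0 x g0 x g0, p = p1 x p2 x p3 and h the diagonal copy of g0.\<close>
definition sum_with_diagonal_is_all ::
  "'a::ab_group_add set \<Rightarrow> 'a set \<Rightarrow> 'a set \<Rightarrow> 'a set \<Rightarrow> bool" where
  "sum_with_diagonal_is_all g0 p1 p2 p3 \<longleftrightarrow>
     {(x1 + y, x2 + y, x3 + y) | x1 x2 x3 y. x1 \<in> p1 \<and> x2 \<in> p2 \<and> x3 \<in> p3 \<and> y \<in> g0}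
       = g0 \<times> g0 \<times> g0"

definition SL2R :: "(real^2^2) set" where "SL2R = {g. det g = 1}"
definition sl2R :: "(real^2^2) set" where "sl2R = {X. trace X = 0}"
definition H_sl2R :: "real^2^2" where
  "H_sl2R = (\<chi> i j. if i = j then (if i = 1 then 1 else -1) else 0)"

definition SL2C :: "(complex^2^2) set" where "SL2C = {g. det g = 1}"
definition sl2C :: "(complex^2^2) set" where "sl2C = {X. trace X = 0}"
definition H_sl2C :: "complex^2^2" where
  "H_sl2C = (\<chi> i j. if i = j then (if i = 1 then 1 else -1) else 0)"

section \<open>SO_e(n,1), acting on R^(n+1) indexed by 'n + 1; the time coordinate is Inr 1\<close>

definition J_Lor :: "real^('n::finite + 1)^('n + 1)" where
  "J_Lor = (\<chi> i j. if i = j then (if i = Inr 1 then -1 else 1) else 0)"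

text \<open>Identity component of SO(n,1): determinant 1 and time-orientation preserving.\<close>
definition SOe :: "(real^('n::finite + 1)^('n + 1)) set" where
  "SOe = {g. transpose g ** J_Lor ** g = J_Lor \<and> det g = 1 \<and> g $ Inr 1 $ Inr 1 > 0}"

definition so_n1 :: "(real^('n::finite + 1)^('n + 1)) set" where
  "so_n1 = {X. transpose X ** J_Lor + J_Lor ** X = 0}"

text \<open>A boost generator in the plane of a (fixed, arbitrary) spatial axis and time.\<close>
definition H_so :: "real^('n::finite + 1)^('n + 1)" where
  "H_so = (\<chi> i j. if (i = Inl (SOME a. True) \<and> j = Inr 1) \<or> (i = Inr 1 \<and> j = Inl (SOME a. True))
                  then 1 else 0)"

end

(*
  For the rank-one groups considered, the minimal parabolic subalgebras correspond to points of
  the boundary: lines in k^2 for SL(2,k), null lines in R^(n,1) for SO_e(n,1).  Writing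
  (a1,a2,a3) = (x1 + y, x2 + y, x3 + y) amounts to finding y with a_i - y in p_i.  If two of
  the p_i coincide, say p1 = p2 = p, then a1 - a2 must lie in p, which fails for a suitable
  choice since p is proper.  If the points are distinct they are pairwise opposite, and y is
  constructed explicitly: in sl(2) as a combination of matrices stabilising two of the three
  lines; in so(n,1) by first matching two null lines with a rotation so_wedge d n1 and then
  correcting on the third line with a boost in the plane of the first two and a rotation in
  their orthogonal complement.  Three pairwise opposite points always exist.
*)

theory Submission
  imports Defs
begin

lemma sum_with_diagonal_is_all_if_solvable:
  fixes g0 :: "'a::ab_group_add set"
  assumes sub: "p1 \<subseteq> g0" "p2 \<subseteq> g0" "p3 \<subseteq> g0"
    and g0_add: "\<And>x y. x \<in> g0 \<Longrightarrow> y \<in> g0 \<Longrightarrow> x + y \<in> g0"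
    and solvable: "\<And>a b c. a \<in> g0 \<Longrightarrow> b \<in> g0 \<Longrightarrow> c \<in> g0 \<Longrightarrow>
        \<exists>y\<in>g0. a - y \<in> p1 \<and> b - y \<in> p2 \<and> c - y \<in> p3"
  shows "sum_with_diagonal_is_all g0 p1 p2 p3"
  unfolding sum_with_diagonal_is_all_def
proof (intro equalityI subsetI)
  fix t assume "t \<in> {(x1 + y, x2 + y, x3 + y) |x1 x2 x3 y. x1 \<in> p1 \<and> x2 \<in> p2 \<and> x3 \<in> p3 \<and> y \<in> g0}"
  then show "t \<in> g0 \<times> g0 \<times> g0" using sub g0_add by blast
next
  fix t assume "t \<in> g0 \<times> g0 \<times> g0"
  then obtain a b c where t: "t = (a, b, c)" "a \<in> g0" "b \<in> g0" "c \<in> g0" by auto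
  from solvable[OF t(2-4)] obtain y where y: "y \<in> g0" "a - y \<in> p1" "b - y \<in> p2" "c - y \<in> p3"
    by blast
  have "t = ((a - y) + y, (b - y) + y, (c - y) + y)" using t by simp
  with y show "t \<in> {(x1 + y, x2 + y, x3 + y) |x1 x2 x3 y. x1 \<in> p1 \<and> x2 \<in> p2 \<and> x3 \<in> p3 \<and> y \<in> g0}"
    by blast
qed

lemma not_sum_with_diagonal_is_all_if_two_equal:
  fixes p :: "'a::ab_group_add set"
  assumes p_diff: "\<And>x y. x \<in> p \<Longrightarrow> y \<in> p \<Longrightarrow> x - y \<in> p"
    and a: "a \<in> g0" "a \<notin> p" and zero: "0 \<in> g0"
    and two_equal: "(p1 = p \<and> p2 = p) \<or> (p1 = p \<and> p3 = p) \<or> (p2 = p \<and> p3 = p)"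
  shows "\<not> sum_with_diagonal_is_all g0 p1 p2 p3"
proof
  assume "sum_with_diagonal_is_all g0 p1 p2 p3"
  then have decomp: "\<exists>x1 x2 x3 y. x1 \<in> p1 \<and> x2 \<in> p2 \<and> x3 \<in> p3 \<and> t = (x1 + y, x2 + y, x3 + y)"
    if "t \<in> g0 \<times> g0 \<times> g0" for t
    using that unfolding sum_with_diagonal_is_all_def by blast
  obtain x1 x2 x3 y where x: "x1 \<in> p1" "x2 \<in> p2" "x3 \<in> p3" "(a, 0, 0) = (x1 + y, x2 + y, x3 + y)"
    using decomp[of "(a, 0, 0)"] a zero by blast
  obtain x1' x2' x3' y' where x': "x2' \<in> p2" "x3' \<in> p3" "(0, a, 0) = (x1' + y', x2' + y', x3' + y')"
    using decomp[of "(0, a, 0)"] a zero by blast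
  have "x2 = - y" "x3 = - y" "x3' = - y'" using x(4) x'(3) by (simp_all add: add_eq_0_iff2)
  then have "a = x1 - x2" "a = x1 - x3" "a = x2' - x3'" using x(4) x'(3) by simp_all
  from two_equal show False
  proof (elim disjE conjE)
    assume "p1 = p" "p2 = p"
    then show False using p_diff[of x1 x2] x(1,2) a(2) \<open>a = x1 - x2\<close> by simp
  next
    assume "p1 = p" "p3 = p"
    then show False using p_diff[of x1 x3] x(1,3) a(2) \<open>a = x1 - x3\<close> by simp
  next
    assume "p2 = p" "p3 = p"
    then show False using p_diff[of x2' x3'] x'(1,2) a(2) \<open>a = x2' - x3'\<close> by simp
  qed
qed

text \<open>The minimal parabolics are the sets \<open>P x\<close>, \<open>x \<in> S\<close>, and \<open>opp x y\<close> says that \<open>P x\<close> and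
  \<open>P y\<close> are opposite.  In real rank one two parabolics that are not opposite coincide
  (\<open>P_eq\<close>), and three pairwise opposite ones can be reached simultaneously from any triple
  (\<open>solvable\<close>).\<close>
locale rank_one_parabolics =
  fixes g0 :: "'a::ab_group_add set" and S :: "'b set" and P :: "'b \<Rightarrow> 'a set"
    and opp :: "'b \<Rightarrow> 'b \<Rightarrow> bool"
  assumes g0_add: "\<And>u v. u \<in> g0 \<Longrightarrow> v \<in> g0 \<Longrightarrow> u + v \<in> g0"
    and g0_zero: "0 \<in> g0"
    and P_sub: "\<And>x. x \<in> S \<Longrightarrow> P x \<subseteq> g0"
    and P_diff: "\<And>x u v. x \<in> S \<Longrightarrow> u \<in> P x \<Longrightarrow> v \<in> P x \<Longrightarrow> u - v \<in> P x"
    and P_proper: "\<And>x. x \<in> S \<Longrightarrow> \<exists>a\<in>g0. a \<notin> P x"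
    and P_eq: "\<And>x y. x \<in> S \<Longrightarrow> y \<in> S \<Longrightarrow> \<not> opp x y \<Longrightarrow> P x = P y"
    and solvable: "\<And>x1 x2 x3 a1 a2 a3. x1 \<in> S \<Longrightarrow> x2 \<in> S \<Longrightarrow> x3 \<in> S \<Longrightarrow>
        opp x1 x2 \<Longrightarrow> opp x1 x3 \<Longrightarrow> opp x2 x3 \<Longrightarrow> a1 \<in> g0 \<Longrightarrow> a2 \<in> g0 \<Longrightarrow> a3 \<in> g0 \<Longrightarrow>
        \<exists>y\<in>g0. a1 - y \<in> P x1 \<and> a2 - y \<in> P x2 \<and> a3 - y \<in> P x3"
    and opp_triple: "\<exists>x1\<in>S. \<exists>x2\<in>S. \<exists>x3\<in>S. opp x1 x2 \<and> opp x1 x3 \<and> opp x2 x3"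
begin

lemma sum_with_diagonal_is_all_if_opp:
  assumes x: "x1 \<in> S" "x2 \<in> S" "x3 \<in> S" and opp: "opp x1 x2" "opp x1 x3" "opp x2 x3"
  shows "sum_with_diagonal_is_all g0 (P x1) (P x2) (P x3)"
proof (rule sum_with_diagonal_is_all_if_solvable[OF P_sub P_sub P_sub g0_add])
  show "\<exists>y\<in>g0. a - y \<in> P x1 \<and> b - y \<in> P x2 \<and> c - y \<in> P x3"
    if "a \<in> g0" "b \<in> g0" "c \<in> g0" for a b c
    by (rule solvable[OF x opp that])
qed (use x in simp_all)

lemma sum_with_diagonal_is_all_iff_distinct_points:
  assumes x: "x1 \<in> S" "x2 \<in> S" "x3 \<in> S"
  shows "sum_with_diagonal_is_all g0 (P x1) (P x2) (P x3) \<longleftrightarrow>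
      P x1 \<noteq> P x2 \<and> P x1 \<noteq> P x3 \<and> P x2 \<noteq> P x3"
proof
  assume sum: "sum_with_diagonal_is_all g0 (P x1) (P x2) (P x3)"
  show "P x1 \<noteq> P x2 \<and> P x1 \<noteq> P x3 \<and> P x2 \<noteq> P x3"
  proof (rule ccontr)
    assume not_distinct: "\<not> ?thesis"
    define x where "x = (if P x1 = P x2 \<or> P x1 = P x3 then x1 else x2)"
    have two_equal: "(P x1 = P x \<and> P x2 = P x) \<or> (P x1 = P x \<and> P x3 = P x) \<or>
        (P x2 = P x \<and> P x3 = P x)"
      using not_distinct by (auto simp: x_def)
    have "x \<in> S" using x by (simp add: x_def)
    then obtain a where "a \<in> g0" "a \<notin> P x" using P_proper by blast
    with two_equal show False
      using not_sum_with_diagonal_is_all_if_two_equal[OF P_diff[OF \<open>x \<in> S\<close>] _ _ g0_zero] sum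
      by blast
  qed
next
  assume "P x1 \<noteq> P x2 \<and> P x1 \<noteq> P x3 \<and> P x2 \<noteq> P x3"
  then have "opp x1 x2" "opp x1 x3" "opp x2 x3" using P_eq x by blast+
  with x show "sum_with_diagonal_is_all g0 (P x1) (P x2) (P x3)"
    by (rule sum_with_diagonal_is_all_if_opp)
qed

lemma sum_with_diagonal_is_all_iff_distinct:
  assumes par_iff: "\<And>p. par p \<longleftrightarrow> (\<exists>x\<in>S. p = P x)"
  shows "(\<forall>p1 p2 p3. par p1 \<and> par p2 \<and> par p3 \<longrightarrow>
            (sum_with_diagonal_is_all g0 p1 p2 p3 \<longleftrightarrow> p1 \<noteq> p2 \<and> p1 \<noteq> p3 \<and> p2 \<noteq> p3))
         \<and> (\<exists>p1 p2 p3. par p1 \<and> par p2 \<and> par p3 \<and> sum_with_diagonal_is_all g0 p1 p2 p3)"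
proof (intro conjI allI impI)
  fix p1 p2 p3 assume "par p1 \<and> par p2 \<and> par p3"
  then obtain x1 x2 x3 where "x1 \<in> S" "x2 \<in> S" "x3 \<in> S" "p1 = P x1" "p2 = P x2" "p3 = P x3"
    unfolding par_iff by blast
  then show "sum_with_diagonal_is_all g0 p1 p2 p3 \<longleftrightarrow> p1 \<noteq> p2 \<and> p1 \<noteq> p3 \<and> p2 \<noteq> p3"
    using sum_with_diagonal_is_all_iff_distinct_points by simp
next
  obtain x1 x2 x3 where x: "x1 \<in> S" "x2 \<in> S" "x3 \<in> S" and "opp x1 x2" "opp x1 x3" "opp x2 x3"
    using opp_triple by blast
  then have "sum_with_diagonal_is_all g0 (P x1) (P x2) (P x3)"
    by (rule sum_with_diagonal_is_all_if_opp)
  with x show "\<exists>p1 p2 p3. par p1 \<and> par p2 \<and> par p3 \<and> sum_with_diagonal_is_all g0 p1 p2 p3"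
    unfolding par_iff by blast
qed

end

lemma matrix_inv_eq_left_inverse:
  fixes g k :: "'a::field^'m^'m"
  assumes "k ** g = mat 1"
  shows "g ** k = mat 1" "matrix_inv g = k"
proof -
  show gk: "g ** k = mat 1" using assms matrix_left_right_inverse by blast
  have inv: "g ** matrix_inv g = mat 1 \<and> matrix_inv g ** g = mat 1"
    unfolding matrix_inv_def by (rule someI[of _ k]) (use gk assms in simp)
  have "matrix_inv g = (k ** g) ** matrix_inv g" using assms by simp
  also have "\<dots> = k ** (g ** matrix_inv g)" by (simp add: matrix_mul_assoc)
  finally show "matrix_inv g = k" using inv by simp
qed

lemma conjugate_image_eq:
  fixes g k :: "'a::field^'m^'m"
  assumes kg: "k ** g = mat 1"
  shows "(\<lambda>X. g ** X ** matrix_inv g) ` A = {X. k ** X ** g \<in> A}"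
proof (intro equalityI subsetI)
  note inv = matrix_inv_eq_left_inverse[OF kg]
  fix X assume "X \<in> (\<lambda>X. g ** X ** matrix_inv g) ` A"
  then obtain S where "S \<in> A" "X = g ** S ** k" using inv by auto
  then have "k ** X ** g = (k ** g) ** S ** (k ** g)" by (simp add: matrix_mul_assoc)
  with \<open>S \<in> A\<close> kg show "X \<in> {X. k ** X ** g \<in> A}" by simp
next
  note inv = matrix_inv_eq_left_inverse[OF kg]
  fix X assume "X \<in> {X. k ** X ** g \<in> A}"
  moreover have "X = g ** (k ** X ** g) ** matrix_inv g"
    by (simp add: inv matrix_mul_assoc) (simp add: inv matrix_mul_assoc[symmetric])
  ultimately show "X \<in> (\<lambda>X. g ** X ** matrix_inv g) ` A" by auto
qed

section \<open>Minimal parabolics of \<open>sl(2)\<close>\<close>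

lemma matrix_vector_mult_2:
  "(X *v v)$1 = X$1$1 * v$1 + X$1$2 * v$2" "(X *v v)$2 = X$2$1 * v$1 + X$2$2 * v$2"
  for X :: "'k::comm_ring_1^2^2"
  by (simp_all add: matrix_vector_mult_def sum_2)

lemma matrix_matrix_mult_2: "(A ** B)$i$j = A$i$1 * B$1$j + A$i$2 * B$2$j"
  for A B :: "'k::comm_ring_1^2^2"
  by (simp add: matrix_matrix_mult_def sum_2)

lemma trace_2: "trace X = X$1$1 + X$2$2" for X :: "'k::comm_ring_1^2^2"
  by (simp add: trace_def sum_2)

lemma matrix_eq_2: "A = B \<longleftrightarrow> A$1$1 = B$1$1 \<and> A$1$2 = B$1$2 \<and> A$2$1 = B$2$1 \<and> A$2$2 = B$2$2"
  for A B :: "'k^2^2"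
  by (auto simp: vec_eq_iff forall_2)

lemma vector_eq_2: "x = y \<longleftrightarrow> x$1 = y$1 \<and> x$2 = y$2" for x y :: "'k^2"
  by (auto simp: vec_eq_iff forall_2)

lemma mat_mult_2: "(mat c ** Z)$i$j = c * Z$i$j" for Z :: "'k::comm_ring_1^2^2"
  by (simp add: matrix_matrix_mult_2 mat_def) (metis exhaust_2)

definition wedge2 :: "'k::comm_ring_1^2 \<Rightarrow> 'k^2 \<Rightarrow> 'k" where
  "wedge2 x y = x$1 * y$2 - x$2 * y$1"

lemma wedge2_self [simp]: "wedge2 v v = 0"
  by (simp add: wedge2_def mult.commute)

lemma wedge2_swap: "wedge2 y x = - wedge2 x y"
  by (simp add: wedge2_def)

lemma wedge2_matrix_vector_mult: "wedge2 (A *v x) (A *v y) = det A * wedge2 x y"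
  for A :: "'k::comm_ring_1^2^2"
  by (simp add: wedge2_def matrix_vector_mult_2 det_2 algebra_simps)

text \<open>\<open>line_defect v X = 0\<close> says that \<open>X\<close> maps the line through \<open>v\<close> into itself, so
  \<open>line_stab v\<close> is the minimal parabolic of \<open>sl(2)\<close> attached to the point \<open>[v]\<close> of the
  projective line.\<close>
definition line_defect :: "'k::comm_ring_1^2 \<Rightarrow> 'k^2^2 \<Rightarrow> 'k" where
  "line_defect v X = wedge2 (X *v v) v"

definition line_stab :: "'k::comm_ring_1^2 \<Rightarrow> ('k^2^2) set" where
  "line_stab v = {X. trace X = 0 \<and> line_defect v X = 0}"

lemma line_defect_expand:
  "line_defect v X = (X$1$1 * v$1 + X$1$2 * v$2) * v$2 - (X$2$1 * v$1 + X$2$2 * v$2) * v$1"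
  by (simp add: line_defect_def wedge2_def matrix_vector_mult_2)

lemma line_defect_add: "line_defect v (X + Y) = line_defect v X + line_defect v Y"
  by (simp add: line_defect_expand algebra_simps)

lemma line_defect_diff: "line_defect v (X - Y) = line_defect v X - line_defect v Y"
  by (simp add: line_defect_expand algebra_simps)

lemma line_defect_mat_mult: "line_defect v (mat c ** X) = c * line_defect v X"
  by (simp add: line_defect_expand mat_mult_2 algebra_simps)

lemma trace_mat_mult_2: "trace (mat c ** X) = c * trace X" for X :: "'k::comm_ring_1^2^2"
  by (simp add: trace_2 mat_mult_2 algebra_simps)

lemma line_stab_axis1: "X \<in> line_stab (axis 1 1) \<longleftrightarrow> trace X = 0 \<and> X$2$1 = 0"
  by (simp add: line_stab_def line_defect_expand axis_def)

lemma line_stab_diff: "X \<in> line_stab v \<Longrightarrow> Y \<in> line_stab v \<Longrightarrow> X - Y \<in> line_stab v"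
  by (simp add: line_stab_def trace_sub line_defect_diff)

definition H_diag :: "'k::comm_ring_1^2^2" where
  "H_diag = (\<chi> i j. if i = j then (if i = 1 then 1 else -1) else 0)"

lemma H_diag_entries [simp]: "H_diag$1$1 = 1" "H_diag$1$2 = 0" "H_diag$2$1 = 0" "H_diag$2$2 = -1"
  by (simp_all add: H_diag_def)

lemma std_min_parabolic_sl2:
  "std_min_parabolic {X::'k::field_char_0^2^2. trace X = 0} H_diag 2 = line_stab (axis 1 1)"
proof (intro equalityI subsetI)
  fix X assume "X \<in> std_min_parabolic {X::'k^2^2. trace X = 0} H_diag 2"
  then obtain Y Z where X: "X = Y + Z" "trace Y = 0" "trace Z = 0" "mbracket H_diag Y = 0"
     "mbracket H_diag Z = mat 2 ** Z"
    unfolding std_min_parabolic_def by auto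
  from X(4) have "(mbracket H_diag Y)$2$1 = 0" by simp
  then have "Y$2$1 = 0" by (simp add: mbracket_def matrix_matrix_mult_2)
  moreover from X(5) have "(mbracket H_diag Z)$2$1 = (mat 2 ** Z)$2$1" by simp
  then have "Z$2$1 = 0" by (simp add: mbracket_def matrix_matrix_mult_2 mat_def)
  ultimately show "X \<in> line_stab (axis 1 1)" using X by (simp add: line_stab_axis1 trace_add)
next
  fix X :: "'k^2^2" assume "X \<in> line_stab (axis 1 1)"
  then have X: "X$1$1 + X$2$2 = 0" "X$2$1 = 0" by (auto simp: line_stab_axis1 trace_2)
  define Y :: "'k^2^2" where "Y = (\<chi> i j. if i = j then X$i$j else 0)"
  define Z :: "'k^2^2" where "Z = (\<chi> i j. if i = 1 \<and> j = 2 then X$i$j else 0)"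
  have "X = Y + Z" using X by (simp add: matrix_eq_2 Y_def Z_def)
  moreover have "trace Y = 0" "trace Z = 0" using X by (simp_all add: trace_2 Y_def Z_def)
  moreover have "mbracket H_diag Y = 0"
    by (simp add: matrix_eq_2 mbracket_def matrix_matrix_mult_2 Y_def)
  moreover have "mbracket H_diag Z = mat 2 ** Z"
    by (simp add: matrix_eq_2 mbracket_def matrix_matrix_mult_2 mat_def Z_def)
  ultimately show "X \<in> std_min_parabolic {X::'k^2^2. trace X = 0} H_diag 2"
    unfolding std_min_parabolic_def by blast
qed

definition adjugate2 :: "'k::comm_ring_1^2^2 \<Rightarrow> 'k^2^2" where
  "adjugate2 g = (\<chi> i j. if i = 1 then (if j = 1 then g$2$2 else - g$1$2)
                                else (if j = 1 then - g$2$1 else g$1$1))"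

lemma adjugate2_entries [simp]:
  "adjugate2 g$1$1 = g$2$2" "adjugate2 g$1$2 = - g$1$2"
  "adjugate2 g$2$1 = - g$2$1" "adjugate2 g$2$2 = g$1$1"
  by (simp_all add: adjugate2_def)

lemma adjugate2_mult: "det g = 1 \<Longrightarrow> adjugate2 g ** g = mat 1" for g :: "'k::comm_ring_1^2^2"
  by (simp add: matrix_eq_2 matrix_matrix_mult_2 mat_def det_2 algebra_simps)

lemma det_adjugate2: "det (adjugate2 g) = det g"
  by (simp add: det_2 algebra_simps)

lemma line_stab_conjugate:
  fixes g :: "'k::field_char_0^2^2"
  assumes "det g = 1"
  shows "(\<lambda>X. g ** X ** matrix_inv g) ` line_stab v = line_stab (g *v v)"
proof -
  let ?k = "adjugate2 g"
  have kg: "?k ** g = mat 1" using assms by (rule adjugate2_mult)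
  have gk: "g ** ?k = mat 1" using matrix_inv_eq_left_inverse(1)[OF kg] .
  have "trace (?k ** X ** g) = trace X" for X
    by (metis gk matrix_mul_assoc matrix_mul_lid trace_mul_sym)
  moreover have "line_defect v (?k ** X ** g) = line_defect (g *v v) X" for X
  proof -
    have "?k *v (g *v v) = v" using kg by (simp add: matrix_vector_mul_assoc)
    moreover have "(?k ** X ** g) *v v = ?k *v (X *v (g *v v))"
      by (simp add: matrix_vector_mul_assoc matrix_mul_assoc)
    ultimately have "line_defect v (?k ** X ** g) = wedge2 (?k *v (X *v (g *v v))) (?k *v (g *v v))"
      by (simp add: line_defect_def)
    then show ?thesis
      using assms by (simp add: wedge2_matrix_vector_mult det_adjugate2 line_defect_def)
  qed
  ultimately show ?thesis
    unfolding conjugate_image_eq[OF kg] by (auto simp: line_stab_def)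
qed

lemma exists_SL2_first_column:
  fixes v :: "'k::field^2"
  assumes "v \<noteq> 0"
  shows "\<exists>g. det g = 1 \<and> g *v axis 1 1 = v"
proof (cases "v$1 = 0")
  case True
  then have "v$2 \<noteq> 0" using assms by (simp add: vector_eq_2)
  let ?g = "(\<chi> i j. if j = 1 then v$i else if i = 1 then - 1 / v$2 else 0) :: 'k^2^2"
  have "det ?g = 1" "?g *v axis 1 1 = v"
    using True \<open>v$2 \<noteq> 0\<close> by (simp_all add: det_2 vector_eq_2 matrix_vector_mult_2 axis_def)
  then show ?thesis by blast
next
  case False
  let ?g = "(\<chi> i j. if j = 1 then v$i else if i = 1 then 0 else 1 / v$1) :: 'k^2^2"
  have "det ?g = 1" "?g *v axis 1 1 = v"
    using False by (simp_all add: det_2 vector_eq_2 matrix_vector_mult_2 axis_def)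
  then show ?thesis by blast
qed

lemma min_parabolic_sl2_iff:
  "min_parabolic {g::'k::field_char_0^2^2. det g = 1} {X. trace X = 0} H_diag 2 p \<longleftrightarrow>
     (\<exists>v \<in> -{0}. p = line_stab v)"
proof -
  have "(\<exists>g. det g = 1 \<and> p = line_stab (g *v axis 1 1)) \<longleftrightarrow> (\<exists>v \<in> -{0}. p = line_stab v)"
  proof
    assume "\<exists>g. det g = 1 \<and> p = line_stab (g *v axis 1 1)"
    then obtain g where "det g = 1" "p = line_stab (g *v axis 1 1)" by blast
    moreover have "g *v axis 1 1 \<noteq> 0"
      using \<open>det g = 1\<close> by (auto simp: vector_eq_2 matrix_vector_mult_2 axis_def det_2)
    ultimately show "\<exists>v \<in> -{0}. p = line_stab v" by blast
  next
    assume "\<exists>v \<in> -{0}. p = line_stab v"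
    with exists_SL2_first_column show "\<exists>g. det g = 1 \<and> p = line_stab (g *v axis 1 1)"
      by fastforce
  qed
  then show ?thesis
    by (simp add: min_parabolic_def std_min_parabolic_sl2 line_stab_conjugate)
qed

lemma line_stab_eq_if_parallel:
  fixes v w :: "'k::field^2"
  assumes "wedge2 v w = 0" "v \<noteq> 0" "w \<noteq> 0"
  shows "line_stab v = line_stab w"
proof -
  have e: "v$1 * w$2 = v$2 * w$1" using assms(1) by (simp add: wedge2_def)
  obtain l where l: "w$1 = l * v$1" "w$2 = l * v$2"
  proof (cases "v$1 = 0")
    case True
    then have "v$2 \<noteq> 0" using assms(2) by (simp add: vector_eq_2)
    with True e have "w$1 = 0" by simp
    show ?thesis using that[of "w$2 / v$2"] True \<open>w$1 = 0\<close> \<open>v$2 \<noteq> 0\<close> by simp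
  next
    case False
    have "w$2 = w$1 / v$1 * v$2" using e False by (simp add: field_simps)
    then show ?thesis using that[of "w$1 / v$1"] False by simp
  qed
  have "l \<noteq> 0" using l assms(3) by (auto simp: vector_eq_2)
  have "line_defect w X = l^2 * line_defect v X" for X
    using l by (simp add: line_defect_expand power2_eq_square algebra_simps)
  then show ?thesis using \<open>l \<noteq> 0\<close> by (simp add: line_stab_def)
qed

lemma line_stab_proper:
  fixes v :: "'k::field^2"
  assumes "v \<noteq> 0"
  shows "\<exists>E. trace E = 0 \<and> E \<notin> line_stab v"
proof (cases "v$2 = 0")
  case True
  then have "v$1 \<noteq> 0" using assms by (simp add: vector_eq_2)
  let ?E = "(\<chi> i j. if i = 2 \<and> j = 1 then 1 else 0) :: 'k^2^2"
  have "trace ?E = 0" "line_defect v ?E = - (v$1 * v$1)"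
    using True by (simp_all add: trace_2 line_defect_expand)
  then show ?thesis using \<open>v$1 \<noteq> 0\<close> by (intro exI[of _ ?E]) (simp add: line_stab_def)
next
  case False
  let ?E = "(\<chi> i j. if i = 1 \<and> j = 2 then 1 else 0) :: 'k^2^2"
  have "trace ?E = 0" "line_defect v ?E = v$2 * v$2" by (simp_all add: trace_2 line_defect_expand)
  then show ?thesis using False by (intro exI[of _ ?E]) (simp add: line_stab_def)
qed

text \<open>\<open>pair_stab p q *v x = - wedge2 q x *s p - wedge2 p x *s q\<close>: a traceless matrix preserving
  the lines through \<open>p\<close> and \<open>q\<close>, and no other line.\<close>
definition pair_stab :: "'k::comm_ring_1^2 \<Rightarrow> 'k^2 \<Rightarrow> 'k^2^2" where
  "pair_stab p q =
     (\<chi> i j. p$i * (if j = 1 then q$2 else - q$1) + q$i * (if j = 1 then p$2 else - p$1))"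

lemma trace_pair_stab: "trace (pair_stab p q) = 0"
  by (simp add: trace_2 pair_stab_def algebra_simps)

lemma line_defect_pair_stab: "line_defect v (pair_stab p q) = 2 * wedge2 v q * wedge2 p v"
  by (simp add: line_defect_expand pair_stab_def wedge2_def algebra_simps)

lemma sl2_three_lines_solvable:
  fixes v1 v2 v3 :: "'k::field_char_0^2"
  assumes w: "wedge2 v1 v2 \<noteq> 0" "wedge2 v1 v3 \<noteq> 0" "wedge2 v2 v3 \<noteq> 0"
    and a: "trace a1 = 0" "trace a2 = 0" "trace a3 = 0"
  shows "\<exists>y. trace y = 0 \<and> a1 - y \<in> line_stab v1 \<and> a2 - y \<in> line_stab v2 \<and> a3 - y \<in> line_stab v3"
proof -
  define M1 where "M1 = pair_stab v2 v3"
  define M2 where "M2 = pair_stab v1 v3"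
  define M3 where "M3 = pair_stab v1 v2"
  define y where "y = mat (line_defect v1 a1 / line_defect v1 M1) ** M1
    + mat (line_defect v2 a2 / line_defect v2 M2) ** M2 + mat (line_defect v3 a3 / line_defect v3 M3) ** M3"
  have "line_defect v1 M1 \<noteq> 0" "line_defect v2 M2 \<noteq> 0" "line_defect v3 M3 \<noteq> 0"
    using w by (simp_all add: M1_def M2_def M3_def line_defect_pair_stab wedge2_swap[of v2 v1]
        wedge2_swap[of v3 v1] wedge2_swap[of v3 v2])
  moreover have "line_defect v1 M2 = 0" "line_defect v1 M3 = 0" "line_defect v2 M1 = 0"
    "line_defect v2 M3 = 0" "line_defect v3 M1 = 0" "line_defect v3 M2 = 0"
    by (simp_all add: M1_def M2_def M3_def line_defect_pair_stab)
  ultimately have "line_defect v1 y = line_defect v1 a1" "line_defect v2 y = line_defect v2 a2"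
    "line_defect v3 y = line_defect v3 a3"
    by (simp_all add: y_def line_defect_add line_defect_mat_mult)
  moreover have "trace y = 0"
    by (simp add: y_def trace_add trace_mat_mult_2 M1_def M2_def M3_def trace_pair_stab)
  ultimately show ?thesis
    using a by (intro exI[of _ y]) (simp add: line_stab_def trace_sub line_defect_diff)
qed

lemma rank_one_parabolics_sl2:
  "rank_one_parabolics {X::'k::field_char_0^2^2. trace X = 0} (-{0}) line_stab (\<lambda>v w. wedge2 v w \<noteq> 0)"
proof
  show "(0::'k^2^2) \<in> {X. trace X = 0}" by (simp add: trace_def)
  show "line_stab v \<subseteq> {X. trace X = 0}" for v :: "'k^2" by (auto simp: line_stab_def)
  show "\<exists>a\<in>{X. trace X = 0}. a \<notin> line_stab v" if "v \<in> -{0}" for v :: "'k^2"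
    using line_stab_proper that by auto
  show "line_stab v = line_stab w" if "v \<in> -{0}" "w \<in> -{0}" "\<not> wedge2 v w \<noteq> 0" for v w :: "'k^2"
    using line_stab_eq_if_parallel that by auto
  show "\<exists>y\<in>{X. trace X = 0}. a1 - y \<in> line_stab v1 \<and> a2 - y \<in> line_stab v2 \<and> a3 - y \<in> line_stab v3"
    if "wedge2 v1 v2 \<noteq> 0" "wedge2 v1 v3 \<noteq> 0" "wedge2 v2 v3 \<noteq> 0"
      and "a1 \<in> {X. trace X = 0}" "a2 \<in> {X. trace X = 0}" "a3 \<in> {X. trace X = 0}"
    for v1 v2 v3 :: "'k^2" and a1 a2 a3
    using sl2_three_lines_solvable that by simp
  show "\<exists>x1\<in>-{0}. \<exists>x2\<in>-{0}. \<exists>x3\<in>-{0}. wedge2 x1 x2 \<noteq> 0 \<and> wedge2 x1 x3 \<noteq> 0 \<and> wedge2 x2 x3 \<noteq> 0"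
    by (rule bexI[of _ "axis 1 1"], rule bexI[of _ "axis 2 1"], rule bexI[of _ "axis 1 1 + axis 2 1"])
      (auto simp: wedge2_def axis_def vector_eq_2)
qed (auto simp: trace_add line_stab_diff)

section \<open>The Lorentz form and \<open>so(n,1)\<close>\<close>

definition time_ix :: "'n::finite + 1" where "time_ix = Inr 1"

text \<open>\<open>H_so\<close> is the boost in the plane of \<open>time_ix\<close> and \<open>boost_ix\<close>.\<close>
definition boost_ix :: "'n::finite + 1" where "boost_ix = Inl (SOME a. True)"

definition lorentz_sign :: "'n::finite + 1 \<Rightarrow> real" where
  "lorentz_sign i = (if i = time_ix then -1 else 1)"

definition lorentz :: "real^('n::finite+1) \<Rightarrow> real^('n+1) \<Rightarrow> real" where
  "lorentz x y = (\<Sum>i\<in>UNIV. lorentz_sign i * x$i * y$i)"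

lemma boost_ix_neq_time_ix [simp]: "boost_ix \<noteq> time_ix" "time_ix \<noteq> boost_ix"
  by (simp_all add: boost_ix_def time_ix_def)

lemma lorentz_sign_boost_ix [simp]: "lorentz_sign boost_ix = 1"
  and lorentz_sign_time_ix [simp]: "lorentz_sign time_ix = -1"
  by (simp_all add: lorentz_sign_def)

lemma lorentz_sign_space: "i \<noteq> time_ix \<Longrightarrow> lorentz_sign i = 1"
  by (simp add: lorentz_sign_def)

lemma lorentz_sign_sq [simp]: "lorentz_sign i * lorentz_sign i = 1"
  by (simp add: lorentz_sign_def)

lemma sum_mult_delta: "(\<Sum>k\<in>UNIV. f k * (if k = j then c k else 0)) = f j * c j"
  for f c :: "'b::finite \<Rightarrow> 'a::comm_ring_1"
  by (simp add: if_distrib[where f="\<lambda>x. f _ * x"] cong: if_cong)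

lemma sum_delta_mult: "(\<Sum>k\<in>UNIV. (if j = k then c k else 0) * f k) = c j * f j"
  for f c :: "'b::finite \<Rightarrow> 'a::comm_ring_1"
  by (simp add: if_distrib[where f="\<lambda>x. x * f _"] cong: if_cong)

lemma J_Lor_entry: "J_Lor $ i $ j = (if i = j then lorentz_sign i else 0)"
  by (simp add: J_Lor_def lorentz_sign_def time_ix_def)

lemma J_Lor_mult_vector: "J_Lor *v y = (\<chi> i. lorentz_sign i * y$i)"
  by (simp add: vec_eq_iff matrix_vector_mult_def J_Lor_entry sum_delta_mult)

lemma J_Lor_squared: "J_Lor ** J_Lor = (mat 1 :: real^('n::finite+1)^('n+1))"
  by (simp add: vec_eq_iff matrix_matrix_mult_def J_Lor_entry mat_def sum_delta_mult)

lemma so_n1_iff_entries: "X \<in> so_n1 \<longleftrightarrow> (\<forall>i j. X$j$i * lorentz_sign j + lorentz_sign i * X$i$j = 0)"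
proof -
  have "(transpose X ** J_Lor + J_Lor ** X) $ i $ j = X$j$i * lorentz_sign j + lorentz_sign i * X$i$j"
    for i j by (simp add: matrix_matrix_mult_def transpose_def J_Lor_entry sum_mult_delta sum_delta_mult)
  then show ?thesis unfolding so_n1_def by (simp add: vec_eq_iff)
qed

lemma so_n1_zero: "0 \<in> so_n1"
  by (simp add: so_n1_iff_entries)

lemma so_n1_add: "X \<in> so_n1 \<Longrightarrow> Y \<in> so_n1 \<Longrightarrow> X + Y \<in> so_n1"
  by (simp add: so_n1_iff_entries algebra_simps)

lemma so_n1_diff:
  assumes "X \<in> so_n1" "Y \<in> so_n1" shows "X - Y \<in> so_n1"
proof -
  have "(X - Y)$j$i * lorentz_sign j + lorentz_sign i * (X - Y)$i$j =
      (X$j$i * lorentz_sign j + lorentz_sign i * X$i$j) - (Y$j$i * lorentz_sign j + lorentz_sign i * Y$i$j)"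
    for i j by (simp add: algebra_simps)
  then show ?thesis using assms unfolding so_n1_iff_entries by simp
qed

lemma so_n1_scaleR:
  assumes "X \<in> so_n1" shows "c *\<^sub>R X \<in> so_n1"
proof -
  have "(c *\<^sub>R X)$j$i * lorentz_sign j + lorentz_sign i * (c *\<^sub>R X)$i$j =
      c * (X$j$i * lorentz_sign j + lorentz_sign i * X$i$j)"
    for i j by (simp add: algebra_simps)
  then show ?thesis using assms unfolding so_n1_iff_entries by simp
qed

lemma lorentz_sym: "lorentz x y = lorentz y x"
  by (simp add: lorentz_def algebra_simps)

lemma lorentz_add_left: "lorentz (x + z) y = lorentz x y + lorentz z y"
  and lorentz_add_right: "lorentz y (x + z) = lorentz y x + lorentz y z"
  and lorentz_diff_left: "lorentz (x - z) y = lorentz x y - lorentz z y"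
  and lorentz_diff_right: "lorentz y (x - z) = lorentz y x - lorentz y z"
  and lorentz_scaleR_left: "lorentz (c *\<^sub>R x) y = c * lorentz x y"
  and lorentz_scaleR_right: "lorentz y (c *\<^sub>R x) = c * lorentz y x"
  and lorentz_minus_left: "lorentz (- x) y = - lorentz x y"
  and lorentz_minus_right: "lorentz y (- x) = - lorentz y x"
  by (simp_all add: lorentz_def algebra_simps sum.distrib sum_subtractf sum_distrib_left sum_negf)

lemmas lorentz_linear = lorentz_add_left lorentz_add_right lorentz_diff_left lorentz_diff_right
  lorentz_scaleR_left lorentz_scaleR_right lorentz_minus_left lorentz_minus_right

lemma lorentz_eq_inner: "lorentz x y = inner x (J_Lor *v y)"
  by (simp add: lorentz_def inner_vec_def J_Lor_mult_vector algebra_simps)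

lemma lorentz_matrix_left: "lorentz (A *v x) y = inner x ((transpose A ** J_Lor) *v y)"
  by (metis lorentz_eq_inner dot_lmul_matrix matrix_vector_mul_assoc transpose_matrix_vector
      transpose_transpose)

lemma matrix_eq_if_inner_axis_eq:
  fixes A B :: "real^'n::finite^'n"
  assumes "\<And>x y. inner x (A *v y) = inner x (B *v y)"
  shows "A = B"
proof -
  have "A $ i $ j = B $ i $ j" for i j
    using assms[of "axis i 1" "axis j 1"] by (simp add: matrix_vector_mult_basis inner_axis' column_def)
  then show ?thesis by (simp add: vec_eq_iff)
qed

lemma lorentz_preserved_iff:
  "(\<forall>x y. lorentz (g *v x) (g *v y) = lorentz x y) \<longleftrightarrow> transpose g ** J_Lor ** g = J_Lor"
proof -
  have e: "lorentz (g *v x) (g *v y) = inner x ((transpose g ** J_Lor ** g) *v y)" for x y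
    by (simp add: lorentz_matrix_left matrix_vector_mul_assoc matrix_mul_assoc)
  show ?thesis
  proof
    assume pres: "\<forall>x y. lorentz (g *v x) (g *v y) = lorentz x y"
    have "inner x ((transpose g ** J_Lor ** g) *v y) = inner x (J_Lor *v y)" for x y
      using pres e[of x y] by (simp only: lorentz_eq_inner[of x y])
    then show "transpose g ** J_Lor ** g = J_Lor" by (rule matrix_eq_if_inner_axis_eq)
  qed (simp add: e lorentz_eq_inner[symmetric])
qed

lemma so_n1_iff_skew: "X \<in> so_n1 \<longleftrightarrow> (\<forall>x y. lorentz (X *v x) y + lorentz x (X *v y) = 0)"
proof -
  have "lorentz x (X *v y) = inner x ((J_Lor ** X) *v y)" for x y
    by (simp add: lorentz_eq_inner matrix_vector_mul_assoc)
  then have e: "lorentz (X *v x) y + lorentz x (X *v y) =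
      inner x ((transpose X ** J_Lor + J_Lor ** X) *v y)" for x y
    by (simp add: lorentz_matrix_left matrix_vector_mult_add_rdistrib inner_add_right)
  show ?thesis
  proof
    assume "\<forall>x y. lorentz (X *v x) y + lorentz x (X *v y) = 0"
    then have "inner x ((transpose X ** J_Lor + J_Lor ** X) *v y) = inner x (0 *v y)" for x y
      by (simp add: e)
    then have "transpose X ** J_Lor + J_Lor ** X = 0" by (rule matrix_eq_if_inner_axis_eq)
    then show "X \<in> so_n1" by (simp add: so_n1_def)
  qed (simp add: e so_n1_def)
qed

lemma so_n1_lorentz_self: "X \<in> so_n1 \<Longrightarrow> lorentz (X *v x) x = 0"
  using so_n1_iff_skew[of X] by (metis lorentz_sym add_eq_0_iff2 neg_equal_zero)

definition so_wedge :: "real^('n::finite+1) \<Rightarrow> real^('n+1) \<Rightarrow> real^('n+1)^('n+1)" where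
  "so_wedge p q = (\<chi> i j. p$i * (lorentz_sign j * q$j) - q$i * (lorentz_sign j * p$j))"

lemma so_wedge_mult_vector: "so_wedge p q *v x = lorentz q x *\<^sub>R p - lorentz p x *\<^sub>R q"
  by (simp add: vec_eq_iff so_wedge_def matrix_vector_mult_def lorentz_def sum_subtractf
      sum_distrib_left algebra_simps)

lemma so_wedge_in_so_n1: "so_wedge p q \<in> so_n1"
  by (simp add: so_n1_iff_entries so_wedge_def algebra_simps)

definition so_line_stab :: "real^('n::finite+1) \<Rightarrow> (real^('n+1)^('n+1)) set" where
  "so_line_stab v = {X. X \<in> so_n1 \<and> (\<exists>l. X *v v = l *\<^sub>R v)}"

lemma so_line_stab_subset: "so_line_stab n \<subseteq> so_n1"
  by (auto simp: so_line_stab_def)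

lemma so_line_stab_diff:
  assumes "X \<in> so_line_stab n" "Y \<in> so_line_stab n" shows "X - Y \<in> so_line_stab n"
proof -
  obtain l m where "X \<in> so_n1" "Y \<in> so_n1" "X *v n = l *\<^sub>R n" "Y *v n = m *\<^sub>R n"
    using assms by (auto simp: so_line_stab_def)
  then show ?thesis
    by (auto simp: so_line_stab_def so_n1_diff matrix_vector_mult_diff_rdistrib scaleR_diff_left
        intro!: exI[of _ "l - m"])
qed

lemma so_line_stab_scaleR:
  assumes "c \<noteq> 0" shows "so_line_stab (c *\<^sub>R n) = so_line_stab n"
proof -
  have "X *v (c *\<^sub>R n) = l *\<^sub>R (c *\<^sub>R n) \<longleftrightarrow> X *v n = l *\<^sub>R n" for X l
    using assms by (simp add: matrix_vector_mult_scaleR scaleR_left_commute[of l] del: scaleR_scaleR)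
  then show ?thesis by (simp add: so_line_stab_def)
qed

section \<open>Minimal parabolics of \<open>so(n,1)\<close>\<close>

lemma SOe_preserves_lorentz: "g \<in> SOe \<Longrightarrow> lorentz (g *v x) (g *v y) = lorentz x y"
  using lorentz_preserved_iff[of g] by (simp add: SOe_def)

lemma SOe_left_inverse:
  assumes "g \<in> SOe" shows "(J_Lor ** transpose g ** J_Lor) ** g = mat 1"
proof -
  have "(J_Lor ** transpose g ** J_Lor) ** g = J_Lor ** (transpose g ** J_Lor ** g)"
    by (simp add: matrix_mul_assoc)
  then show ?thesis using assms J_Lor_squared by (simp add: SOe_def)
qed

lemma SOe_matrix_inv:
  assumes "g \<in> SOe"
  shows "matrix_inv g ** g = mat 1" "g ** matrix_inv g = mat 1"
  using matrix_inv_eq_left_inverse[OF SOe_left_inverse[OF assms]] SOe_left_inverse[OF assms] by simp_all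

lemma SOe_matrix_inv_preserves_lorentz:
  assumes "g \<in> SOe" shows "lorentz (matrix_inv g *v x) (matrix_inv g *v y) = lorentz x y"
  using SOe_preserves_lorentz[OF assms, of "matrix_inv g *v x" "matrix_inv g *v y"]
  by (simp add: matrix_vector_mul_assoc SOe_matrix_inv[OF assms])

lemma so_line_stab_conjugate:
  assumes pres: "\<And>x y. lorentz (h *v x) (h *v y) = lorentz x y"
    and hk: "h ** k = mat 1" and kh: "k ** h = mat 1"
    and X: "X \<in> so_line_stab (h *v n)"
  shows "k ** X ** h \<in> so_line_stab n"
proof -
  obtain l where "X \<in> so_n1" and l: "X *v (h *v n) = l *\<^sub>R (h *v n)"
    using X by (auto simp: so_line_stab_def)
  have hv: "h *v ((k ** X ** h) *v x) = X *v (h *v x)" for x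
    using hk by (simp add: matrix_vector_mul_assoc matrix_mul_assoc)
  have "lorentz ((k ** X ** h) *v x) y + lorentz x ((k ** X ** h) *v y) = 0" for x y
  proof -
    have "lorentz ((k ** X ** h) *v x) y + lorentz x ((k ** X ** h) *v y)
        = lorentz (X *v (h *v x)) (h *v y) + lorentz (h *v x) (X *v (h *v y))"
      using pres[of "(k ** X ** h) *v x" y] pres[of x "(k ** X ** h) *v y"] by (simp add: hv)
    also have "\<dots> = 0" using \<open>X \<in> so_n1\<close> by (simp add: so_n1_iff_skew)
    finally show ?thesis .
  qed
  then have so: "k ** X ** h \<in> so_n1" by (simp add: so_n1_iff_skew)
  have "(k ** X ** h) *v n = k *v (X *v (h *v n))"
    by (simp add: matrix_vector_mul_assoc matrix_mul_assoc)
  also have "\<dots> = l *\<^sub>R (k *v (h *v n))" by (simp only: l matrix_vector_mult_scaleR)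
  also have "\<dots> = l *\<^sub>R n" using kh by (simp add: matrix_vector_mul_assoc)
  finally show ?thesis using so by (auto simp: so_line_stab_def)
qed

lemma so_line_stab_conjugate_iff:
  assumes g: "g \<in> SOe"
  shows "X \<in> so_line_stab (g *v n) \<longleftrightarrow> matrix_inv g ** X ** g \<in> so_line_stab n"
proof
  note inv = SOe_matrix_inv[OF g]
  show "X \<in> so_line_stab (g *v n) \<Longrightarrow> matrix_inv g ** X ** g \<in> so_line_stab n"
    using so_line_stab_conjugate[OF SOe_preserves_lorentz[OF g] inv(2) inv(1)] .
  assume "matrix_inv g ** X ** g \<in> so_line_stab n"
  then have "matrix_inv g ** X ** g \<in> so_line_stab (matrix_inv g *v (g *v n))"
    using inv by (simp add: matrix_vector_mul_assoc)
  from so_line_stab_conjugate[OF SOe_matrix_inv_preserves_lorentz[OF g] inv(1) inv(2) this]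
  show "X \<in> so_line_stab (g *v n)"
    using inv by (simp add: matrix_mul_assoc) (simp add: matrix_mul_assoc[symmetric])
qed

definition std_null :: "real^('n::finite+1)" where "std_null = axis boost_ix 1 + axis time_ix 1"

lemma std_null_entry: "std_null $ i = (if i = boost_ix \<or> i = time_ix then 1 else 0)"
  by (auto simp: std_null_def axis_def)

lemma mult_std_null: "(X *v std_null) $ i = X$i$boost_ix + X$i$time_ix"
  by (simp add: std_null_def matrix_vector_right_distrib matrix_vector_mult_basis column_def)

lemma H_so_entry:
  "H_so $ i $ j = (if (i = boost_ix \<and> j = time_ix) \<or> (i = time_ix \<and> j = boost_ix) then 1 else 0)"
  by (simp add: H_so_def boost_ix_def time_ix_def)

lemma mbracket_H_so:
  "mbracket H_so X $ i $ j =
     (if i = boost_ix then X$time_ix$j else if i = time_ix then X$boost_ix$j else 0)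
   - (if j = boost_ix then X$i$time_ix else if j = time_ix then X$i$boost_ix else 0)"
proof -
  have "(H_so ** X) $ i $ j = (if i = boost_ix then X$time_ix$j else if i = time_ix then X$boost_ix$j else 0)"
    by (auto simp: matrix_matrix_mult_def H_so_entry if_distrib[where f="\<lambda>x. x * _"]
        cong: if_cong)
  moreover have "(X ** H_so) $ i $ j = (if j = boost_ix then X$i$time_ix else if j = time_ix then X$i$boost_ix else 0)"
    by (auto simp: matrix_matrix_mult_def H_so_entry if_distrib[where f="\<lambda>x. _ * x"]
        cong: if_cong)
  ultimately show ?thesis by (simp add: mbracket_def)
qed

lemma std_min_parabolic_so_subset:
  "std_min_parabolic so_n1 H_so 1 \<subseteq> so_line_stab (std_null::real^('n::finite+1))"
proof
  fix X :: "real^('n+1)^('n+1)"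
  assume "X \<in> std_min_parabolic so_n1 H_so 1"
  then obtain Y Z where YZ: "X = Y + Z" "Y \<in> so_n1" "Z \<in> so_n1" "mbracket H_so Y = 0"
     "mbracket H_so Z = mat 1 ** Z" unfolding std_min_parabolic_def by auto
  have Y: "(if i = boost_ix then Y$time_ix$j else if i = time_ix then Y$boost_ix$j else 0) =
            (if j = boost_ix then Y$i$time_ix else if j = time_ix then Y$i$boost_ix else 0)" for i j
    using arg_cong[OF YZ(4), of "\<lambda>M. M $ i $ j"] by (simp add: mbracket_H_so)
  have Z: "(if i = boost_ix then Z$time_ix$j else if i = time_ix then Z$boost_ix$j else 0) -
            (if j = boost_ix then Z$i$time_ix else if j = time_ix then Z$i$boost_ix else 0) = Z$i$j" for i j
    using arg_cong[OF YZ(5), of "\<lambda>M. M $ i $ j"] by (simp add: mbracket_H_so)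
  have Z_plane: "Z$boost_ix$boost_ix = 0" "Z$boost_ix$time_ix = 0" "Z$time_ix$boost_ix = 0"
    "Z$time_ix$time_ix = 0"
    using Z[of boost_ix boost_ix] Z[of boost_ix time_ix] Z[of time_ix boost_ix] Z[of time_ix time_ix]
    by simp_all
  have "(X *v std_null) $ i = ((Y$boost_ix$boost_ix + Y$boost_ix$time_ix) *\<^sub>R std_null) $ i" for i
  proof (cases "i = boost_ix \<or> i = time_ix")
    case True
    then show ?thesis using Z_plane Y[of boost_ix boost_ix] Y[of boost_ix time_ix] YZ(1)
      by (auto simp: mult_std_null std_null_entry)
  next
    case False
    then show ?thesis using Y[of i boost_ix] Y[of i time_ix] Z[of i boost_ix] Z[of i time_ix] YZ(1)
      by (simp add: mult_std_null std_null_entry)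
  qed
  then have "X *v std_null = (Y$boost_ix$boost_ix + Y$boost_ix$time_ix) *\<^sub>R std_null"
    by (simp add: vec_eq_iff)
  moreover have "X \<in> so_n1" using YZ so_n1_add by simp
  ultimately show "X \<in> so_line_stab std_null" unfolding so_line_stab_def by blast
qed

text \<open>The decomposition \<open>X = Y + Z\<close> splits \<open>X\<close> into the blocks preserving and exchanging
  the boost plane and its orthogonal complement.\<close>
lemma std_min_parabolic_so_supset:
  "so_line_stab (std_null::real^('n::finite+1)) \<subseteq> std_min_parabolic so_n1 H_so 1"
proof
  fix X :: "real^('n+1)^('n+1)"
  assume "X \<in> so_line_stab std_null"
  then obtain l where X: "X \<in> so_n1" "X *v std_null = l *\<^sub>R std_null"
    by (auto simp: so_line_stab_def)
  let ?plane = "\<lambda>i. i = boost_ix \<or> i = time_ix"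
  have skew: "X$j$i * lorentz_sign j + lorentz_sign i * X$i$j = 0" for i j
    using X(1) by (simp add: so_n1_iff_entries)
  have diag: "X$i$i = 0" for i using skew[of i i] by (simp add: lorentz_sign_def split: if_splits)
  have plane: "X$time_ix$boost_ix = X$boost_ix$time_ix" using skew[of boost_ix time_ix] by simp
  have out: "X$i$boost_ix = - X$i$time_ix" "X$time_ix$i = X$boost_ix$i" if "\<not> ?plane i" for i
  proof -
    have "(X *v std_null)$i = (l *\<^sub>R std_null)$i" using X(2) by simp
    then show "X$i$boost_ix = - X$i$time_ix" using that by (simp add: mult_std_null std_null_entry)
    then show "X$time_ix$i = X$boost_ix$i"
      using that skew[of boost_ix i] skew[of time_ix i] by (simp add: lorentz_sign_space)
  qed
  define Z :: "real^('n+1)^('n+1)" where "Z = (\<chi> i j. if ?plane i \<noteq> ?plane j then X$i$j else 0)"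
  define Y where "Y = X - Z"
  have Z_entry: "Z$i$j = (if ?plane i \<noteq> ?plane j then X$i$j else 0)" for i j
    by (simp add: Z_def)
  have Y_entry: "Y$i$j = (if ?plane i \<noteq> ?plane j then 0 else X$i$j)" for i j
    by (cases "?plane i"; cases "?plane j") (simp_all add: Y_def Z_entry)
  have "Z \<in> so_n1"
    unfolding so_n1_iff_entries using skew by (auto simp: Z_entry mult.commute)
  moreover from this have "Y \<in> so_n1" using X(1) by (simp add: Y_def so_n1_diff)
  moreover have "mbracket H_so Y = 0"
    by (simp add: vec_eq_iff mbracket_H_so Y_entry diag plane)
  moreover have "mbracket H_so Z = mat 1 ** Z"
    by (simp add: vec_eq_iff mbracket_H_so Z_entry diag out)
  moreover have "X = Y + Z" by (simp add: Y_def)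
  ultimately show "X \<in> std_min_parabolic so_n1 H_so 1"
    unfolding std_min_parabolic_def by blast
qed

lemma min_parabolic_so_iff:
  "min_parabolic (SOe::(real^('n::finite+1)^('n+1)) set) so_n1 H_so 1 p \<longleftrightarrow>
     (\<exists>g\<in>SOe. p = so_line_stab (g *v std_null))"
proof -
  have "std_min_parabolic so_n1 H_so 1 = so_line_stab (std_null::real^('n+1))"
    using std_min_parabolic_so_subset std_min_parabolic_so_supset by blast
  then have "(\<lambda>X. g ** X ** matrix_inv g) ` std_min_parabolic so_n1 H_so 1 = so_line_stab (g *v std_null)"
    if g: "g \<in> (SOe::(real^('n+1)^('n+1)) set)" for g
    unfolding conjugate_image_eq[OF SOe_matrix_inv(1)[OF g]]
    using so_line_stab_conjugate_iff[OF g] by auto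
  then show ?thesis unfolding min_parabolic_def by auto
qed

lemma lorentz_axis_right: "lorentz x (axis j 1) = lorentz_sign j * x$j"
proof -
  have "lorentz x (axis j 1) = (\<Sum>k\<in>UNIV. (lorentz_sign k * x$k) * (if k = j then 1 else 0))"
    unfolding lorentz_def by (rule sum.cong) (auto simp: axis_def)
  then show ?thesis by (simp add: sum_mult_delta)
qed

lemma lorentz_axis: "lorentz (axis i 1) (axis j 1) = (if i = j then lorentz_sign i else 0)"
  by (simp add: lorentz_axis_right, simp add: axis_def)

lemma lorentz_self_eq_0_if_spacelike:
  assumes "x $ time_ix = 0" "lorentz x x = 0" shows "x = 0"
proof -
  have "lorentz x x = (\<Sum>i\<in>UNIV. x$i * x$i)"
    unfolding lorentz_def by (rule sum.cong) (use assms(1) in \<open>auto simp: lorentz_sign_def\<close>)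
  then have "\<forall>i\<in>UNIV. x$i * x$i = 0" using assms(2)
    by (subst sum_nonneg_eq_0_iff[symmetric]) auto
  then show ?thesis by (simp add: vec_eq_iff)
qed

text \<open>The difference of suitable multiples of two orthogonal null vectors has no time component
  and is null, hence vanishes.\<close>
lemma null_orthogonal_parallel:
  assumes n: "lorentz n n = 0" and m: "lorentz m m = 0" and nm: "lorentz n m = 0" and "n \<noteq> 0"
  shows "m = (m$time_ix / n$time_ix) *\<^sub>R n"
proof -
  define z where "z = m$time_ix *\<^sub>R n - n$time_ix *\<^sub>R m"
  have "z$time_ix = 0" by (simp add: z_def)
  moreover have "lorentz z z = 0" using n m nm by (simp add: z_def lorentz_linear lorentz_sym[of m n])
  ultimately have "z = 0" by (rule lorentz_self_eq_0_if_spacelike)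
  have "n$time_ix \<noteq> 0" using lorentz_self_eq_0_if_spacelike[of n] n \<open>n \<noteq> 0\<close> by auto
  have "n$time_ix *\<^sub>R m = m$time_ix *\<^sub>R n" using \<open>z = 0\<close> unfolding z_def by simp
  then have "(1 / n$time_ix) *\<^sub>R (n$time_ix *\<^sub>R m) = (1 / n$time_ix) *\<^sub>R (m$time_ix *\<^sub>R n)" by simp
  then show ?thesis using \<open>n$time_ix \<noteq> 0\<close> by simp
qed

lemma so_line_stab_eq_if_orthogonal:
  assumes "lorentz n n = 0" "lorentz m m = 0" "lorentz n m = 0" "n \<noteq> 0" "m \<noteq> 0"
  shows "so_line_stab n = so_line_stab m"
proof -
  let ?c = "m$time_ix / n$time_ix"
  have m: "m = ?c *\<^sub>R n" using null_orthogonal_parallel assms(1-4) .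
  with \<open>m \<noteq> 0\<close> have "?c \<noteq> 0" by auto
  then show ?thesis by (subst m) (simp add: so_line_stab_scaleR)
qed

lemma lorentz_std_null: "lorentz std_null std_null = 0"
  by (simp add: std_null_def lorentz_linear lorentz_axis)

lemma SOe_std_null:
  fixes g :: "real^('n::finite+1)^('n+1)"
  assumes "g \<in> SOe"
  shows "lorentz (g *v std_null) (g *v std_null) = 0" "g *v std_null \<noteq> 0"
proof -
  show "lorentz (g *v std_null) (g *v std_null) = 0"
    using SOe_preserves_lorentz[OF assms] lorentz_std_null by simp
  have "(std_null::real^('n+1)) \<noteq> 0"
  proof
    assume "(std_null::real^('n+1)) = 0"
    then have "(std_null::real^('n+1)) $ boost_ix = 0" by simp
    then show False by (simp add: std_null_entry)
  qed
  moreover have "matrix_inv g *v (g *v std_null) = std_null"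
    using SOe_matrix_inv(1)[OF assms] by (simp add: matrix_vector_mul_assoc)
  ultimately show "g *v std_null \<noteq> 0" by auto
qed

definition transverse_part :: "real^('n::finite+1) \<Rightarrow> real^('n+1) \<Rightarrow> real^('n+1) \<Rightarrow> real^('n+1)" where
  "transverse_part n1 n2 x =
     x - (lorentz x n2 / lorentz n1 n2) *\<^sub>R n1 - (lorentz x n1 / lorentz n1 n2) *\<^sub>R n2"

lemma lorentz_transverse_part:
  assumes "lorentz n1 n1 = 0" "lorentz n2 n2 = 0" "lorentz n1 n2 \<noteq> 0"
  shows "lorentz (transverse_part n1 n2 x) n1 = 0" "lorentz (transverse_part n1 n2 x) n2 = 0"
  using assms by (simp_all add: transverse_part_def lorentz_linear lorentz_sym[of n2 n1])

lemma lorentz_transverse_part_self: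
  assumes "lorentz n1 n1 = 0" "lorentz n2 n2 = 0" "lorentz n3 n3 = 0" "lorentz n1 n2 \<noteq> 0"
  shows "lorentz (transverse_part n1 n2 n3) (transverse_part n1 n2 n3)
    = - 2 * lorentz n3 n1 * lorentz n3 n2 / lorentz n1 n2"
  using assms by (simp add: transverse_part_def lorentz_linear lorentz_sym[of n2 n1]
      lorentz_sym[of n1 n3] lorentz_sym[of n2 n3] field_simps)

lemma so_two_null_lines_solvable:
  assumes n1: "lorentz n1 n1 = 0" and c: "lorentz n1 n2 \<noteq> 0" and a: "a1 \<in> so_n1" "a2 \<in> so_n1"
  shows "\<exists>y\<in>so_n1. a1 - y \<in> so_line_stab n1 \<and> a2 - y \<in> so_line_stab n2"
proof -
  define d where "d = (1 / lorentz n1 n2) *\<^sub>R ((a2 - a1) *v n2)"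
  define y where "y = a1 + so_wedge d n1"
  have "y \<in> so_n1" using a by (simp add: y_def so_n1_add so_wedge_in_so_n1)
  moreover have "(a1 - y) *v n1 = lorentz d n1 *\<^sub>R n1"
    unfolding y_def matrix_vector_mult_diff_rdistrib matrix_vector_mult_add_rdistrib
    using n1 by (simp add: so_wedge_mult_vector)
  moreover have "lorentz d n2 = 0"
    using so_n1_lorentz_self[OF so_n1_diff[OF a(2) a(1)], of n2] by (simp add: d_def lorentz_linear)
  then have "(a2 - y) *v n2 = 0 *\<^sub>R n2"
    using c by (simp add: y_def d_def so_wedge_mult_vector matrix_vector_mult_diff_rdistrib
        matrix_vector_mult_add_rdistrib lorentz_sym[of n2 n1])
  ultimately show ?thesis using a by (auto simp: so_line_stab_def so_n1_diff)
qed

text \<open>The correction combines the boost \<open>so_wedge n1 n2\<close> with a rotation in the plane of the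
  transverse parts \<open>u\<close> of \<open>n3\<close> and \<open>w\<close> of \<open>r\<close>.\<close>
lemma so_null_line_correction:
  assumes N: "lorentz n1 n1 = 0" "lorentz n2 n2 = 0" "lorentz n3 n3 = 0"
    and C: "lorentz n1 n2 \<noteq> 0" "lorentz n1 n3 \<noteq> 0" "lorentz n2 n3 \<noteq> 0"
    and r: "lorentz r n3 = 0"
  shows "\<exists>Q. Q \<in> so_line_stab n1 \<and> Q \<in> so_line_stab n2 \<and> (\<exists>t. r - Q *v n3 = t *\<^sub>R n3)"
proof -
  define c where "c = lorentz n1 n2"
  define u where "u = transverse_part n1 n2 n3"
  define w where "w = transverse_part n1 n2 r"
  define \<alpha> where "\<alpha> = lorentz n3 n2 / c"
  define \<beta> where "\<beta> = lorentz n3 n1 / c"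
  define x where "x = lorentz r n2 / c"
  define z where "z = lorentz r n1 / c"
  define t where "t = lorentz w u / lorentz u u"
  define s where "s = (x - t * \<alpha>) / (\<alpha> * c)"
  define Q where "Q = s *\<^sub>R so_wedge n1 n2 + (1 / lorentz u u) *\<^sub>R so_wedge w u"
  have c0: "c \<noteq> 0" and c21: "lorentz n2 n1 = c" using C by (simp_all add: c_def lorentz_sym)
  have a0: "\<alpha> \<noteq> 0" "\<beta> \<noteq> 0" using C c0 by (auto simp: \<alpha>_def \<beta>_def lorentz_sym)
  have n3: "n3 = u + \<alpha> *\<^sub>R n1 + \<beta> *\<^sub>R n2"
    by (simp add: u_def transverse_part_def \<alpha>_def \<beta>_def c_def)
  have r_eq: "r = w + x *\<^sub>R n1 + z *\<^sub>R n2"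
    by (simp add: w_def transverse_part_def x_def z_def c_def)
  have orth: "lorentz u n1 = 0" "lorentz u n2 = 0" "lorentz w n1 = 0" "lorentz w n2 = 0"
    "lorentz n1 u = 0" "lorentz n2 u = 0" "lorentz n1 w = 0" "lorentz n2 w = 0"
    using lorentz_transverse_part[OF N(1,2) C(1)] by (simp_all add: u_def w_def lorentz_sym)
  have uu: "lorentz u u = - 2 * \<alpha> * \<beta> * c"
    using lorentz_transverse_part_self[OF N C(1)] c0
    by (simp add: u_def \<alpha>_def \<beta>_def c_def field_simps)
  then have uu0: "lorentz u u \<noteq> 0" using a0 c0 by simp
  have un3: "lorentz u n3 = lorentz u u" "lorentz w n3 = lorentz w u"
    by (subst n3, simp add: orth lorentz_linear)+
  have n13: "lorentz n1 n3 = \<beta> * c" "lorentz n2 n3 = \<alpha> * c"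
    using c0 by (simp_all add: \<alpha>_def \<beta>_def lorentz_sym)
  have "Q \<in> so_n1" by (simp add: Q_def so_n1_add so_n1_scaleR so_wedge_in_so_n1)
  moreover have "Q *v n1 = (s * c) *\<^sub>R n1" "Q *v n2 = (- (s * c)) *\<^sub>R n2"
    using N orth by (simp_all add: Q_def so_wedge_mult_vector scaleR_matrix_vector_assoc[symmetric]
        matrix_vector_mult_add_rdistrib c21 c_def)
  moreover have "r - Q *v n3 = t *\<^sub>R n3"
  proof -
    have Qn3: "Q *v n3 = (s * (\<alpha> * c)) *\<^sub>R n1 - (s * (\<beta> * c)) *\<^sub>R n2 + w - t *\<^sub>R u"
      using uu0 un3 n13 by (simp add: Q_def so_wedge_mult_vector scaleR_matrix_vector_assoc[symmetric]
          t_def algebra_simps)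
    have "lorentz r n3 = t * lorentz u u + x * (\<beta> * c) + z * (\<alpha> * c)"
      using uu0 un3 n13 by (subst r_eq) (simp add: orth lorentz_linear t_def)
    then have "c * (\<alpha> * z + \<beta> * x - 2 * \<alpha> * \<beta> * t) = 0"
      using r uu by (simp add: algebra_simps)
    then have z_rel: "\<alpha> * z + \<beta> * x = 2 * \<alpha> * \<beta> * t" using c0 by simp
    define k1 where "k1 = x - s * (\<alpha> * c) - t * \<alpha>"
    define k2 where "k2 = z + s * (\<beta> * c) - t * \<beta>"
    have u_eq: "u = n3 - \<alpha> *\<^sub>R n1 - \<beta> *\<^sub>R n2" using n3 by (simp add: algebra_simps)
    have "r - Q *v n3 = t *\<^sub>R n3 + k1 *\<^sub>R n1 + k2 *\<^sub>R n2"
      unfolding Qn3 k1_def k2_def u_eq by (subst r_eq) (simp add: algebra_simps)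
    moreover have "k1 = 0" using a0 c0 by (simp add: k1_def s_def field_simps)
    moreover have "\<alpha> * k2 = \<alpha> * z + \<beta> * x - 2 * \<alpha> * \<beta> * t"
      using a0 c0 by (simp add: k2_def s_def field_simps)
    then have "k2 = 0" using z_rel a0 by simp
    ultimately show ?thesis by simp
  qed
  ultimately show ?thesis by (auto simp: so_line_stab_def simp del: scaleR_minus_left)
qed

lemma so_three_null_lines_solvable:
  assumes N: "lorentz n1 n1 = 0" "lorentz n2 n2 = 0" "lorentz n3 n3 = 0"
    and C: "lorentz n1 n2 \<noteq> 0" "lorentz n1 n3 \<noteq> 0" "lorentz n2 n3 \<noteq> 0"
    and a: "a1 \<in> so_n1" "a2 \<in> so_n1" "a3 \<in> so_n1"
  shows "\<exists>y\<in>so_n1. a1 - y \<in> so_line_stab n1 \<and> a2 - y \<in> so_line_stab n2 \<and> a3 - y \<in> so_line_stab n3"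
proof -
  obtain y0 where y0: "y0 \<in> so_n1" "a1 - y0 \<in> so_line_stab n1" "a2 - y0 \<in> so_line_stab n2"
    using so_two_null_lines_solvable[OF N(1) C(1) a(1,2)] by blast
  have "lorentz ((a3 - y0) *v n3) n3 = 0" using a(3) y0(1) by (simp add: so_n1_diff so_n1_lorentz_self)
  then obtain Q t where Q: "Q \<in> so_line_stab n1" "Q \<in> so_line_stab n2"
    and t: "(a3 - y0) *v n3 - Q *v n3 = t *\<^sub>R n3"
    using so_null_line_correction[OF N C] by blast
  have "Q \<in> so_n1" using Q(1) so_line_stab_subset by blast
  then have "y0 + Q \<in> so_n1" "a3 - (y0 + Q) \<in> so_n1" using y0(1) a(3) by (simp_all add: so_n1_add so_n1_diff)
  moreover have "(a3 - (y0 + Q)) *v n3 = t *\<^sub>R n3"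
    using t by (simp add: matrix_vector_mult_diff_rdistrib matrix_vector_mult_add_rdistrib algebra_simps)
  moreover have "a1 - (y0 + Q) \<in> so_line_stab n1" "a2 - (y0 + Q) \<in> so_line_stab n2"
    using so_line_stab_diff[OF y0(2) Q(1)] so_line_stab_diff[OF y0(3) Q(2)] by (simp_all add: diff_diff_eq)
  ultimately show ?thesis by (auto simp: so_line_stab_def)
qed

lemma exists_third_index:
  assumes "CARD('n::finite) \<ge> 2" shows "\<exists>i::'n + 1. i \<noteq> boost_ix \<and> i \<noteq> time_ix"
proof -
  have "\<exists>b::'n. b \<noteq> (SOME a. True)"
  proof (rule ccontr)
    assume "\<nexists>b::'n. b \<noteq> (SOME a. True)"
    then have "(UNIV::'n set) = {SOME a. True}" by auto
    then have "CARD('n) = card {SOME a::'n. True}" by (rule arg_cong)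
    with assms show False by simp
  qed
  then obtain b :: 'n where "b \<noteq> (SOME a. True)" by blast
  then show ?thesis by (auto simp: boost_ix_def time_ix_def intro!: exI[of _ "Inl b"])
qed

lemma so_wedge_SOe:
  assumes "g \<in> SOe"
  shows "so_wedge (g *v p) (g *v q) *v (g *v x) = g *v (so_wedge p q *v x)"
  by (simp add: so_wedge_mult_vector SOe_preserves_lorentz[OF assms] matrix_vector_mult_diff_distrib
      matrix_vector_mult_scaleR)

text \<open>This is where \<open>n \<ge> 2\<close> is needed: for \<open>SO(1,1)\<close> the Lie algebra is one-dimensional and
  equals the stabiliser of each null line.\<close>
lemma so_line_stab_proper:
  fixes g :: "real^('n::finite+1)^('n+1)"
  assumes card: "CARD('n) \<ge> 2" and g: "g \<in> SOe"
  shows "\<exists>E\<in>so_n1. E \<notin> so_line_stab (g *v std_null)"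
proof -
  obtain i :: "'n + 1" where i: "i \<noteq> boost_ix" "i \<noteq> time_ix" using exists_third_index[OF card] by blast
  define E where "E = so_wedge (g *v axis boost_ix 1) (g *v axis i 1)"
  have "E \<notin> so_line_stab (g *v std_null)"
  proof
    assume "E \<in> so_line_stab (g *v std_null)"
    then obtain l where "E *v (g *v std_null) = l *\<^sub>R (g *v std_null)" by (auto simp: so_line_stab_def)
    moreover have "E *v (g *v std_null) = g *v (so_wedge (axis boost_ix 1) (axis i 1) *v std_null)"
      by (simp only: E_def so_wedge_SOe[OF g])
    then have "E *v (g *v std_null) = g *v (- axis i 1)"
      using i by (simp add: so_wedge_mult_vector lorentz_sym[of _ std_null] lorentz_axis_right
          std_null_entry)
    ultimately have "matrix_inv g *v (g *v (- axis i 1)) = matrix_inv g *v (g *v (l *\<^sub>R std_null))"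
      by (simp add: matrix_vector_mult_scaleR)
    then have "- axis i 1 = l *\<^sub>R (std_null :: real^('n+1))"
      using SOe_matrix_inv(1)[OF g] by (simp add: matrix_vector_mul_assoc)
    then have "(- axis i 1) $ time_ix = (l *\<^sub>R (std_null::real^('n+1))) $ time_ix"
      "(- axis i 1) $ i = (l *\<^sub>R (std_null::real^('n+1))) $ i" by simp_all
    then show False using i by (simp add: std_null_entry axis_def)
  qed
  then show ?thesis using so_wedge_in_so_n1 E_def by blast
qed

section \<open>Three pairwise opposite null lines\<close>

lemma SOe_intro:
  assumes "\<And>x y. lorentz (g *v x) (g *v y) = lorentz x y" "det g = 1" "g $ time_ix $ time_ix > 0"
  shows "g \<in> SOe"
  using assms lorentz_preserved_iff[of g] by (simp add: SOe_def time_ix_def)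

definition diag_mat :: "('n::finite+1 \<Rightarrow> real) \<Rightarrow> real^('n+1)^('n+1)" where
  "diag_mat f = (\<chi> i j. if i = j then f i else 0)"

lemma diag_mat_mult_vector: "diag_mat f *v x = (\<chi> i. f i * x$i)"
  by (simp add: vec_eq_iff matrix_vector_mult_def diag_mat_def sum_delta_mult)

lemma det_diag_mat: "det (diag_mat f) = prod f UNIV"
  by (subst det_diagonal) (auto simp: diag_mat_def)

lemma diag_mat_preserves_lorentz:
  assumes "\<And>i. f i * f i = 1"
  shows "lorentz (diag_mat f *v x) (diag_mat f *v y) = lorentz x y"
proof -
  have "lorentz_sign i * (f i * x$i) * (f i * y$i) = (f i * f i) * (lorentz_sign i * x$i * y$i)" for i
    by (simp add: algebra_simps)
  then have e: "lorentz_sign i * (f i * x$i) * (f i * y$i) = lorentz_sign i * x$i * y$i" for i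
    by (simp add: assms)
  show ?thesis unfolding lorentz_def diag_mat_mult_vector by (simp add: e)
qed

lemma diag_mat_in_SOe:
  assumes "\<And>i. f i * f i = 1" "f time_ix = 1" "prod f UNIV = 1"
  shows "diag_mat f \<in> SOe"
  using assms by (intro SOe_intro diag_mat_preserves_lorentz)
    (simp_all add: det_diag_mat, simp add: diag_mat_def)

definition perm_mat :: "('n::finite+1 \<Rightarrow> 'n+1) \<Rightarrow> real^('n+1)^('n+1)" where
  "perm_mat s = (\<chi> i j. if s i = j then 1 else 0)"

lemma perm_mat_mult_vector: "perm_mat s *v x = (\<chi> i. x $ s i)"
  using sum_delta_mult[of "s _" "\<lambda>_. 1" "\<lambda>j. x$j"]
  by (simp add: vec_eq_iff matrix_vector_mult_def perm_mat_def)

lemma perm_mat_mult: "(perm_mat s ** D) $ i $ j = D $ (s i) $ j"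
  using sum_delta_mult[of "s i" "\<lambda>_. 1" "\<lambda>k. D$k$j"]
  by (simp add: matrix_matrix_mult_def perm_mat_def)

lemma det_perm_mat:
  fixes s :: "'n::finite+1 \<Rightarrow> 'n+1"
  assumes "s permutes UNIV" shows "det (perm_mat s) = of_int (sign s)"
proof -
  have "perm_mat s = (\<chi> i. (mat 1 :: real^('n+1)^('n+1)) $ s i)"
    by (simp add: perm_mat_def vec_eq_iff mat_def)
  then show ?thesis using det_permute_rows[OF assms, of "mat 1 :: real^('n+1)^('n+1)"] by simp
qed

lemma perm_mat_preserves_lorentz:
  assumes p: "s permutes UNIV" and sign: "\<And>i. lorentz_sign (s i) = lorentz_sign i"
  shows "lorentz (perm_mat s *v x) (perm_mat s *v y) = lorentz x y"
proof -
  have "lorentz (perm_mat s *v x) (perm_mat s *v y) = (\<Sum>i\<in>UNIV. lorentz_sign (s i) * x$(s i) * y$(s i))"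
    by (simp add: lorentz_def perm_mat_mult_vector sign)
  also have "\<dots> = lorentz x y"
    using sum.permute[OF p, of "\<lambda>i. lorentz_sign i * x$i * y$i"] by (simp add: o_def lorentz_def)
  finally show ?thesis .
qed

text \<open>The three null lines are spanned by \<open>e_t + e_a\<close>, \<open>e_t - e_a\<close> and \<open>e_t - e_b\<close>, where
  \<open>e_a\<close> is the boost axis and \<open>e_b\<close> a further spatial axis.\<close>
lemma SOe_opposite_triple:
  assumes "CARD('n::finite) \<ge> 2"
  shows "\<exists>g1\<in>SOe. \<exists>g2\<in>SOe. \<exists>g3\<in>(SOe :: (real^('n+1)^('n+1)) set).
     lorentz (g1 *v std_null) (g2 *v std_null) \<noteq> 0 \<and> lorentz (g1 *v std_null) (g3 *v std_null) \<noteq> 0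
     \<and> lorentz (g2 *v std_null) (g3 *v std_null) \<noteq> 0"
proof -
  obtain b :: "'n + 1" where b: "b \<noteq> boost_ix" "b \<noteq> time_ix"
    using exists_third_index[OF assms] by blast
  define f2 :: "'n+1 \<Rightarrow> real" where "f2 = (\<lambda>i. if i = boost_ix \<or> i = b then -1 else 1)"
  define f3 :: "'n+1 \<Rightarrow> real" where "f3 = (\<lambda>i. if i = boost_ix then -1 else 1)"
  define sw where "sw = Transposition.transpose boost_ix b"
  define g1 :: "real^('n+1)^('n+1)" where "g1 = mat 1"
  define g2 where "g2 = diag_mat f2"
  define g3 where "g3 = perm_mat sw ** diag_mat f3"
  have sw: "sw permutes UNIV" by (simp add: sw_def permutes_swap_id)
  have "prod f2 UNIV = 1"
  proof -
    have "prod f2 UNIV = f2 boost_ix * f2 b * prod f2 (UNIV - {boost_ix, b})"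
      using b by (simp add: prod.remove[of UNIV boost_ix] prod.remove[of "UNIV - {boost_ix}" b]
          insert_Diff_if Diff_insert2[symmetric])
    then show ?thesis by (simp add: f2_def prod.neutral)
  qed
  then have G2: "g2 \<in> SOe"
    using b unfolding g2_def by (intro diag_mat_in_SOe) (simp_all add: f2_def)
  have f3: "prod f3 UNIV = -1" "f3 i * f3 i = 1" for i
    using prod.remove[of UNIV boost_ix f3] by (simp_all add: f3_def prod.neutral)
  have "lorentz_sign (sw i) = lorentz_sign i" for i
    using b by (cases "i = boost_ix"; cases "i = b") (auto simp: sw_def lorentz_sign_space)
  then have "lorentz (g3 *v x) (g3 *v y) = lorentz x y" for x y
    by (simp add: g3_def matrix_vector_mul_assoc[symmetric] perm_mat_preserves_lorentz[OF sw]
        diag_mat_preserves_lorentz f3)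
  moreover have "det g3 = 1"
    using det_perm_mat[OF sw] b f3 by (simp add: g3_def det_mul det_diag_mat sw_def sign_swap_id)
  moreover have "g3 $ time_ix $ time_ix = 1"
    using b by (simp add: g3_def perm_mat_mult diag_mat_def f3_def sw_def)
  ultimately have G3: "g3 \<in> SOe" by (intro SOe_intro) simp_all
  have G1: "g1 \<in> SOe" unfolding g1_def by (rule SOe_intro) (simp, simp add: det_I, simp add: mat_def)
  have "g1 *v std_null = axis boost_ix 1 + axis time_ix 1"
    by (simp add: g1_def std_null_def)
  moreover have "g2 *v std_null = axis time_ix 1 - axis boost_ix 1"
    using b by (auto simp: g2_def diag_mat_mult_vector vec_eq_iff f2_def std_null_entry axis_def)
  moreover have "g3 *v std_null = axis time_ix 1 - axis b 1"
    using b by (auto simp: g3_def matrix_vector_mul_assoc[symmetric] perm_mat_mult_vector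
        diag_mat_mult_vector vec_eq_iff f3_def std_null_entry axis_def sw_def transpose_eq_iff)
  ultimately have vals: "lorentz (g1 *v std_null) (g2 *v std_null) = -2"
    "lorentz (g1 *v std_null) (g3 *v std_null) = -1" "lorentz (g2 *v std_null) (g3 *v std_null) = -1"
    using b by (simp_all add: lorentz_linear lorentz_axis)
  show ?thesis by (rule bexI[OF _ G1], rule bexI[OF _ G2], rule bexI[OF _ G3]) (simp add: vals)
qed

lemma rank_one_parabolics_so_n1:
  assumes "CARD('n::finite) \<ge> 2"
  shows "rank_one_parabolics so_n1 (SOe :: (real^('n+1)^('n+1)) set)
    (\<lambda>g. so_line_stab (g *v std_null)) (\<lambda>g h. lorentz (g *v std_null) (h *v std_null) \<noteq> 0)"
proof
  show "\<exists>a\<in>so_n1. a \<notin> so_line_stab (g *v std_null)" if "g \<in> SOe" for g :: "real^('n+1)^('n+1)"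
    using so_line_stab_proper[OF assms that] .
  show "so_line_stab (g *v std_null) = so_line_stab (h *v std_null)"
    if "g \<in> SOe" "h \<in> SOe" "\<not> lorentz (g *v std_null) (h *v std_null) \<noteq> 0" for g h
    using that by (intro so_line_stab_eq_if_orthogonal) (simp_all add: SOe_std_null)
  show "\<exists>y\<in>so_n1. a1 - y \<in> so_line_stab (g1 *v std_null) \<and> a2 - y \<in> so_line_stab (g2 *v std_null)
      \<and> a3 - y \<in> so_line_stab (g3 *v std_null)"
    if "g1 \<in> SOe" "g2 \<in> SOe" "g3 \<in> SOe"
      and "lorentz (g1 *v std_null) (g2 *v std_null) \<noteq> 0" "lorentz (g1 *v std_null) (g3 *v std_null) \<noteq> 0"
      "lorentz (g2 *v std_null) (g3 *v std_null) \<noteq> 0"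
      and "a1 \<in> so_n1" "a2 \<in> so_n1" "a3 \<in> so_n1" for g1 g2 g3 a1 a2 a3
    using that by (intro so_three_null_lines_solvable) (simp_all add: SOe_std_null)
  show "\<exists>g1\<in>SOe :: (real^('n+1)^('n+1)) set. \<exists>g2\<in>SOe. \<exists>g3\<in>SOe.
      lorentz (g1 *v std_null) (g2 *v std_null) \<noteq> 0 \<and> lorentz (g1 *v std_null) (g3 *v std_null) \<noteq> 0
      \<and> lorentz (g2 *v std_null) (g3 *v std_null) \<noteq> 0"
    by (rule SOe_opposite_triple[OF assms])
qed (auto simp: so_n1_add so_n1_zero so_line_stab_diff so_line_stab_subset[THEN subsetD])

theorem proposition6p1:
  assumes "CARD('n::finite) \<ge> 2"
  shows
   \<comment> \<open>G0 = SL(2,R)\<close>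
   "((\<forall>p1 p2 p3. min_parabolic SL2R sl2R H_sl2R 2 p1 \<and> min_parabolic SL2R sl2R H_sl2R 2 p2
         \<and> min_parabolic SL2R sl2R H_sl2R 2 p3 \<longrightarrow>
        (sum_with_diagonal_is_all sl2R p1 p2 p3 \<longleftrightarrow> p1 \<noteq> p2 \<and> p1 \<noteq> p3 \<and> p2 \<noteq> p3))
     \<and> (\<exists>p1 p2 p3. min_parabolic SL2R sl2R H_sl2R 2 p1 \<and> min_parabolic SL2R sl2R H_sl2R 2 p2
         \<and> min_parabolic SL2R sl2R H_sl2R 2 p3 \<and> sum_with_diagonal_is_all sl2R p1 p2 p3))
  \<and> \<comment> \<open>G0 = SL(2,C)\<close>
    ((\<forall>p1 p2 p3. min_parabolic SL2C sl2C H_sl2C 2 p1 \<and> min_parabolic SL2C sl2C H_sl2C 2 p2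
         \<and> min_parabolic SL2C sl2C H_sl2C 2 p3 \<longrightarrow>
        (sum_with_diagonal_is_all sl2C p1 p2 p3 \<longleftrightarrow> p1 \<noteq> p2 \<and> p1 \<noteq> p3 \<and> p2 \<noteq> p3))
     \<and> (\<exists>p1 p2 p3. min_parabolic SL2C sl2C H_sl2C 2 p1 \<and> min_parabolic SL2C sl2C H_sl2C 2 p2
         \<and> min_parabolic SL2C sl2C H_sl2C 2 p3 \<and> sum_with_diagonal_is_all sl2C p1 p2 p3))
  \<and> \<comment> \<open>G0 = SO_e(n,1), n = CARD('n) \<ge> 2\<close>
    ((\<forall>p1 p2 p3. min_parabolic (SOe::(real^('n + 1)^('n + 1)) set) so_n1 H_so 1 p1
         \<and> min_parabolic (SOe::(real^('n + 1)^('n + 1)) set) so_n1 H_so 1 p2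
         \<and> min_parabolic (SOe::(real^('n + 1)^('n + 1)) set) so_n1 H_so 1 p3 \<longrightarrow>
        (sum_with_diagonal_is_all so_n1 p1 p2 p3 \<longleftrightarrow> p1 \<noteq> p2 \<and> p1 \<noteq> p3 \<and> p2 \<noteq> p3))
     \<and> (\<exists>p1 p2 p3. min_parabolic (SOe::(real^('n + 1)^('n + 1)) set) so_n1 H_so 1 p1
         \<and> min_parabolic (SOe::(real^('n + 1)^('n + 1)) set) so_n1 H_so 1 p2
         \<and> min_parabolic (SOe::(real^('n + 1)^('n + 1)) set) so_n1 H_so 1 p3
         \<and> sum_with_diagonal_is_all so_n1 p1 p2 p3))"
proof -
  have "SL2R = {g. det g = 1}" "sl2R = {X. trace X = 0}" "H_sl2R = H_diag"
    "SL2C = {g. det g = 1}" "sl2C = {X. trace X = 0}" "H_sl2C = H_diag"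
    by (simp_all add: SL2R_def sl2R_def H_sl2R_def SL2C_def sl2C_def H_sl2C_def H_diag_def)
  then show ?thesis
    using rank_one_parabolics.sum_with_diagonal_is_all_iff_distinct
        [OF rank_one_parabolics_sl2[where 'k = real] min_parabolic_sl2_iff]
      rank_one_parabolics.sum_with_diagonal_is_all_iff_distinct
        [OF rank_one_parabolics_sl2[where 'k = complex] min_parabolic_sl2_iff]
      rank_one_parabolics.sum_with_diagonal_is_all_iff_distinct
        [OF rank_one_parabolics_so_n1[OF assms] min_parabolic_so_iff]
    by simp
qed

end
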